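(* Let $N\ge 1$, let $\mathbf{A}=[a_{ij}]$ and $\mathbf{B}=[b_{ij}]$ be the adjacency matrices of two undirected, connected graphs on the node set $\{1,\dots,N\}$, and let $\beta_1,\delta_1,\beta_2,\delta_2>0$ with $\tau_1=\beta_1/\delta_1$, $\tau_2=\beta_2/\delta_2$. Consider the bi-virus system $$\dot{\mathbf{x}}=\beta_1\,\mathrm{diag}(\mathbf{1}-\mathbf{x}-\mathbf{y})\mathbf{A}\mathbf{x}-\delta_1\mathbf{x},\qquad \dot{\mathbf{y}}=\beta_2\,\mathrm{diag}(\mathbf{1}-\mathbf{x}-\mathbf{y})\mathbf{B}\mathbf{y}-\delta_2\mathbf{y}$$ on $D=\{(\mathbf{x},\mathbf{y})\in[0,1]^{2N}:\mathbf{x}+\mathbf{y}\le\mathbf{1}\}$. If $\tau_1\lambda(\mathbf{A})\le 1$ and $\tau_2\lambda(\mathbf{B})\le 1$, then every trajectory of this system starting from any point of $D$ converges to $(\mathbf{0},\mathbf{0})$.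
   Context: $\lambda(\mathbf{M})$ denotes the largest real part of the eigenvalues of a square matrix $\mathbf{M}$ (for a nonnegative matrix this is its spectral radius). $\mathrm{diag}(\mathbf{v})$ is the diagonal matrix with the entries of $\mathbf{v}$ on the diagonal; $\mathbf{1}$ and $\mathbf{0}$ are the all-ones and all-zeros vectors in $\mathbb{R}^N$; vector inequalities are entrywise. *)

theory Defs
  imports "HOL-Analysis.Analysis"
begin

definition diagm :: "real ^ 'n \<Rightarrow> real ^ 'n ^ 'n" where
  "diagm v = (\<chi> i j. if i = j then v $ i else 0)"

definition eigenvalues_of :: "real ^ 'n ^ 'n \<Rightarrow> complex set" where
  "eigenvalues_of M = {c. \<exists>v :: complex ^ 'n. v \<noteq> 0 \<and>
      (\<chi> i j. complex_of_real (M $ i $ j)) *v v = c *s v}"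

definition lambda_max :: "real ^ 'n ^ 'n \<Rightarrow> real" where
  "lambda_max M = Max (Re ` eigenvalues_of M)"

definition undirected_adjacency :: "real ^ 'n ^ 'n \<Rightarrow> bool" where
  "undirected_adjacency A \<longleftrightarrow>
     (\<forall>i j. A $ i $ j = 0 \<or> A $ i $ j = 1) \<and>
     (\<forall>i j. A $ i $ j = A $ j $ i) \<and>
     (\<forall>i. A $ i $ i = 0)"

definition connected_adjacency :: "real ^ 'n ^ 'n \<Rightarrow> bool" where
  "connected_adjacency A \<longleftrightarrow> (\<forall>i j. (i, j) \<in> {(k, l). A $ k $ l \<noteq> 0}\<^sup>*)"

definition biv_domain :: "((real, 'n::finite) vec * (real, 'n) vec) set" where
  "biv_domain = {(x, y). (\<forall>i. 0 \<le> x $ i \<and> x $ i \<le> 1 \<and> 0 \<le> y $ i \<and> y $ i \<le> 1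
                              \<and> x $ i + y $ i \<le> 1)}"

definition biv_field_x :: "real \<Rightarrow> real \<Rightarrow> real ^ 'n ^ 'n \<Rightarrow> real ^ 'n \<Rightarrow> real ^ 'n \<Rightarrow> real ^ 'n" where
  "biv_field_x \<beta> \<delta> A x y = \<beta> *\<^sub>R (diagm (vec 1 - x - y) *v (A *v x)) - \<delta> *\<^sub>R x"

end

theory Submission
  imports Defs
begin

text \<open>
  Forward invariance of D: in the coordinates \<open>x\<^sub>i\<close>, \<open>y\<^sub>i\<close>, \<open>1 - x\<^sub>i - y\<^sub>i\<close> the vector field
  is quasi-positive, i.e. wherever a coordinate is negative its derivative times that coordinate
  is bounded by a multiple of the sum \<open>W\<close> of the squared negative parts of all coordinates.
  Hence \<open>W' \<le> K W\<close> on bounded time intervals, and \<open>W\<close>, which starts at \<open>0\<close>, stays \<open>0\<close>.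

  Convergence: on D the derivative of \<open>|x|\<^sup>2\<close> is at most \<open>-2\<beta>\<^sub>1 F(x)\<close> with
  \<open>F(z) = \<rho> |z|\<^sup>2 - z \<bullet> A z + \<Sum>\<^sub>i z\<^sub>i\<^sup>2 (A z)\<^sub>i\<close> and \<open>\<rho> = \<delta>\<^sub>1 / \<beta>\<^sub>1 \<ge> \<lambda>(A)\<close>.
  By the Rayleigh bound \<open>z \<bullet> A z \<le> \<lambda>(A) |z|\<^sup>2\<close> for symmetric \<open>A\<close>, \<open>F\<close> is positive at every
  nonzero nonnegative \<open>z\<close>: equality would make \<open>z\<close> a nonnegative eigenvector for \<open>\<rho> > 0\<close>,
  so the cubic term would be positive. By compactness \<open>F\<close> is bounded away from \<open>0\<close> where
  \<open>|x|\<^sup>2 \<ge> \<epsilon>\<close>, so \<open>|x|\<^sup>2\<close> decreases to \<open>0\<close>. The same argument applies to \<open>y\<close>.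
\<close>

section \<open>Symmetric matrices and the largest eigenvalue\<close>

lemma eigenvector_combination_eq_0_imp_coeffs_eq_0:
  fixes M :: "complex ^ 'n ^ 'n" and v :: "complex \<Rightarrow> complex ^ 'n"
  assumes "finite F" and eigen: "\<And>c. c \<in> F \<Longrightarrow> M *v v c = c *s v c \<and> v c \<noteq> 0"
    and "(\<Sum>c\<in>F. u c *s v c) = 0" and "c \<in> F"
  shows "u c = 0"
  using assms
proof (induction F arbitrary: u c rule: finite_induct)
  case empty
  then show ?case by simp
next
  case (insert c0 F)
  have comb: "u c0 *s v c0 + (\<Sum>c\<in>F. u c *s v c) = 0"
    using insert.hyps insert.prems(2) by simp
  have "M *v (u c0 *s v c0 + (\<Sum>c\<in>F. u c *s v c)) = 0"
    using comb by simp
  then have M_comb: "(c0 * u c0) *s v c0 + (\<Sum>c\<in>F. (c * u c) *s v c) = 0"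
    using insert.prems(1)
    by (simp add: vec.linear_add[OF matrix_vector_mul_linear_gen]
        vec.linear_sum[OF matrix_vector_mul_linear_gen]
        vec.linear_scale[OF matrix_vector_mul_linear_gen] mult.commute)
  have "c0 *s (u c0 *s v c0 + (\<Sum>c\<in>F. u c *s v c)) = 0"
    using comb by simp
  then have c0_comb: "(c0 * u c0) *s v c0 + (\<Sum>c\<in>F. (c0 * u c) *s v c) = 0"
    by (simp add: vec.scale_right_distrib vec.scale_sum_right)
  \<comment> \<open>Subtracting the two combinations eliminates the eigenvector of \<open>c0\<close>.\<close>
  have "(\<Sum>c\<in>F. ((c - c0) * u c) *s v c)
      = (\<Sum>c\<in>F. (c * u c) *s v c) - (\<Sum>c\<in>F. (c0 * u c) *s v c)"
    by (simp add: sum_subtractf[symmetric] left_diff_distrib)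
  also have "\<dots> = 0"
    using arg_cong2[OF M_comb c0_comb, of "(-)"] by simp
  finally have diff_comb: "(\<Sum>c\<in>F. ((c - c0) * u c) *s v c) = 0" .
  have eigen_F: "M *v v c = c *s v c \<and> v c \<noteq> 0" if "c \<in> F" for c
    using insert.prems(1) that by simp
  have "(c - c0) * u c = 0" if "c \<in> F" for c
    by (rule insert.IH[where u = "\<lambda>c. (c - c0) * u c", OF eigen_F diff_comb that])
  then have rest: "u c = 0" if "c \<in> F" for c
    using insert.hyps(2) that by auto
  then have "u c0 *s v c0 = 0"
    using comb by simp
  then have "u c0 = 0"
    using insert.prems(1) by auto
  then show ?case
    using rest insert.prems(3) by auto
qed

text \<open>\<^const>\<open>lambda_max\<close> is a \<^const>\<open>Max\<close>, which carries no information on an infinite set.\<close>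

lemma finite_eigenvalues_of: "finite (eigenvalues_of (M :: real ^ 'n ^ 'n))"
proof (rule ccontr)
  let ?Mc = "(\<chi> i j. complex_of_real (M $ i $ j)) :: complex ^ 'n ^ 'n"
  define v where "v c = (SOME w. w \<noteq> 0 \<and> ?Mc *v w = c *s w)" for c
  have v: "?Mc *v v c = c *s v c \<and> v c \<noteq> 0" if "c \<in> eigenvalues_of M" for c
  proof -
    have "\<exists>w. w \<noteq> 0 \<and> ?Mc *v w = c *s w"
      using that unfolding eigenvalues_of_def by auto
    then show ?thesis
      unfolding v_def by (metis (mono_tags, lifting) someI_ex)
  qed
  assume "infinite (eigenvalues_of M)"
  then obtain F where F: "F \<subseteq> eigenvalues_of M" "finite F" "card F = Suc CARD('n)"
    using infinite_arbitrarily_large by blast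
  have eigen: "?Mc *v v c = c *s v c \<and> v c \<noteq> 0" if "c \<in> F" for c
    using v F(1) that by blast
  have inj: "inj_on v F"
  proof
    fix a b
    assume ab: "a \<in> F" "b \<in> F" "v a = v b"
    have "a *s v a = ?Mc *v v a"
      using eigen[OF ab(1)] by simp
    also have "\<dots> = b *s v a"
      using eigen[OF ab(2)] unfolding ab(3) by simp
    finally show "a = b"
      using eigen[OF ab(1)] by simp
  qed
  have "vec.independent (v ` F)"
  proof (rule vec.independent_if_scalars_zero)
    show "finite (v ` F)"
      using F(2) by simp
    fix f w
    assume comb: "(\<Sum>w\<in>v ` F. f w *s w) = 0" and "w \<in> v ` F"
    then obtain c where c: "c \<in> F" "w = v c"
      by blast
    have "(\<Sum>c\<in>F. f (v c) *s v c) = 0"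
      using comb by (simp add: sum.reindex[OF inj])
    then have "f (v c) = 0"
      using eigenvector_combination_eq_0_imp_coeffs_eq_0[OF F(2) eigen, where u = "\<lambda>c. f (v c)"] c(1)
      by blast
    then show "f w = 0"
      using c(2) by simp
  qed
  then have "card (v ` F) \<le> vec.dim (v ` F)"
    using vec.independent_bound_general by blast
  also have "\<dots> \<le> CARD('n)"
    using vec.dim_subset_UNIV by (simp add: vec.dimension_def card_cart_basis)
  finally show False
    using F(3) card_image[OF inj] by simp
qed

lemma inner_matrix_vector_mult_symmetric:
  fixes A :: "real ^ 'n ^ 'n"
  assumes "\<And>i j. A $ i $ j = A $ j $ i"
  shows "u \<bullet> (A *v w) = w \<bullet> (A *v u)"
proof -
  have "u \<bullet> (A *v w) = (\<Sum>i\<in>UNIV. \<Sum>j\<in>UNIV. u $ i * A $ i $ j * w $ j)"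
    by (simp add: inner_vec_def matrix_vector_mult_def sum_distrib_left mult.assoc)
  also have "\<dots> = (\<Sum>j\<in>UNIV. \<Sum>i\<in>UNIV. u $ i * A $ i $ j * w $ j)"
    by (rule sum.swap)
  also have "\<dots> = w \<bullet> (A *v u)"
    by (simp add: inner_vec_def matrix_vector_mult_def sum_distrib_left assms
        mult.commute mult.left_commute)
  finally show ?thesis .
qed

lemma quadratic_form_maximizer_is_eigenvector:
  fixes A :: "real ^ 'n ^ 'n"
  assumes sym: "\<And>i j. A $ i $ j = A $ j $ i"
    and le: "\<And>v. v \<bullet> (A *v v) \<le> m * (v \<bullet> v)"
    and eq: "x \<bullet> (A *v x) = m * (x \<bullet> x)"
  shows "A *v x = m *\<^sub>R x"
proof -
  define w where "w = A *v x - m *\<^sub>R x"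
  define k where "k = m * (w \<bullet> w) - w \<bullet> (A *v w)"
  \<comment> \<open>The form \<open>m |v|^2 - v \<bullet> A v\<close> is nonnegative, vanishes at \<open>x\<close>,
    and its derivative at \<open>x\<close> in direction \<open>w\<close> is \<open>-2 |w|^2\<close>.\<close>
  have expand: "m * ((x + t *\<^sub>R w) \<bullet> (x + t *\<^sub>R w)) - (x + t *\<^sub>R w) \<bullet> (A *v (x + t *\<^sub>R w))
      = t\<^sup>2 * k - 2 * t * (w \<bullet> w)" for t
  proof -
    have "A *v (x + t *\<^sub>R w) = A *v x + t *\<^sub>R (A *v w)"
      by (simp add: matrix_vector_right_distrib matrix_vector_mult_scaleR)
    then have yAy: "(x + t *\<^sub>R w) \<bullet> (A *v (x + t *\<^sub>R w))
        = x \<bullet> (A *v x) + 2 * t * (w \<bullet> (A *v x)) + t\<^sup>2 * (w \<bullet> (A *v w))"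
      using inner_matrix_vector_mult_symmetric[OF sym, of x w]
      by (simp add: power2_eq_square algebra_simps)
    have yy: "(x + t *\<^sub>R w) \<bullet> (x + t *\<^sub>R w) = x \<bullet> x + 2 * t * (w \<bullet> x) + t\<^sup>2 * (w \<bullet> w)"
      by (simp add: inner_add_left inner_add_right power2_eq_square inner_commute)
    have wAx: "w \<bullet> (A *v x) = w \<bullet> w + m * (w \<bullet> x)"
      unfolding w_def by (simp add: inner_diff_left inner_commute)
    show ?thesis
      unfolding yAy yy wAx eq k_def by algebra
  qed
  have "2 * (w \<bullet> w) \<le> e" if "e > 0" for e
  proof -
    define t where "t = e / (\<bar>k\<bar> + 1)"
    have t: "t > 0" "t * \<bar>k\<bar> \<le> e"
      using that by (auto simp: t_def field_simps)
    have "2 * t * (w \<bullet> w) \<le> t\<^sup>2 * k"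
      using le[of "x + t *\<^sub>R w"] expand[of t] by simp
    then have "2 * (w \<bullet> w) \<le> t * k"
      using t(1) by (simp add: power2_eq_square mult.assoc)
    also have "\<dots> \<le> t * \<bar>k\<bar>"
      using t(1) by (intro mult_left_mono) auto
    also have "\<dots> \<le> e"
      by (fact t(2))
    finally show ?thesis .
  qed
  then have "w \<bullet> w \<le> 0"
    using field_le_epsilon[of "2 * (w \<bullet> w)" 0] by simp
  then have "w = 0"
    by (metis inner_gt_zero_iff not_le)
  then show ?thesis
    unfolding w_def by simp
qed

lemma real_eigenvalue_le_lambda_max:
  fixes A :: "real ^ 'n ^ 'n"
  assumes "A *v u = m *\<^sub>R u" and "u \<noteq> 0"
  shows "m \<le> lambda_max A"
proof -
  let ?uc = "(\<chi> i. complex_of_real (u $ i)) :: complex ^ 'n"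
  have "?uc \<noteq> 0"
    using assms(2) by (simp add: vec_eq_iff)
  moreover have "(\<chi> i j. complex_of_real (A $ i $ j)) *v ?uc = complex_of_real m *s ?uc"
  proof -
    have "(\<Sum>j\<in>UNIV. A $ i $ j * u $ j) = m * u $ i" for i
      using arg_cong[OF assms(1), of "\<lambda>z. z $ i"] by (simp add: matrix_vector_mult_def)
    then show ?thesis
      by (simp add: matrix_vector_mult_def vec_eq_iff flip: of_real_mult of_real_sum)
  qed
  ultimately have "complex_of_real m \<in> eigenvalues_of A"
    unfolding eigenvalues_of_def by blast
  then show ?thesis
    unfolding lambda_max_def using finite_eigenvalues_of[of A]
    by (metis Max_ge Re_complex_of_real finite_imageI image_eqI)
qed

lemma quadratic_form_le_lambda_max:
  fixes A :: "real ^ 'n ^ 'n"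
  assumes sym: "\<And>i j. A $ i $ j = A $ j $ i"
  shows "v \<bullet> (A *v v) \<le> lambda_max A * (v \<bullet> v)"
proof -
  let ?q = "\<lambda>v::real ^ 'n. v \<bullet> (A *v v)"
  have cont: "continuous_on (sphere 0 1) ?q"
    by (intro continuous_intros linear_continuous_on matrix_vector_mul_bounded_linear)
  have "axis undefined 1 \<in> sphere (0 :: real ^ 'n) 1"
    by simp
  then have nonempty: "sphere (0 :: real ^ 'n) 1 \<noteq> {}"
    by blast
  obtain u where u: "u \<in> sphere 0 1" "\<forall>w\<in>sphere 0 1. ?q w \<le> ?q u"
    using continuous_attains_sup[OF compact_sphere nonempty cont] by blast
  define m where "m = ?q u"
  have le: "?q w \<le> m * (w \<bullet> w)" for w
  proof (cases "w = 0")
    case False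
    define w1 where "w1 = w /\<^sub>R norm w"
    have "w1 \<in> sphere 0 1"
      using False by (simp add: w1_def)
    then have "(norm w)\<^sup>2 * ?q w1 \<le> (norm w)\<^sup>2 * m"
      using u(2) unfolding m_def by (intro mult_left_mono) auto
    moreover have "w = norm w *\<^sub>R w1"
      using False by (simp add: w1_def)
    then have "?q w = (norm w)\<^sup>2 * ?q w1"
      by (metis inner_scaleR_left inner_scaleR_right matrix_vector_mult_scaleR power2_eq_square
          mult.assoc)
    ultimately show ?thesis
      by (simp add: power2_norm_eq_inner mult.commute)
  qed simp
  have "u \<bullet> u = 1"
    using u(1) by (simp add: norm_eq_1)
  then have "A *v u = m *\<^sub>R u"
    by (intro quadratic_form_maximizer_is_eigenvector[OF sym le]) (simp add: m_def)
  then have "m \<le> lambda_max A"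
    by (rule real_eigenvalue_le_lambda_max) (use u(1) in auto)
  then show ?thesis
    using le[of v] mult_right_mono[of m "lambda_max A" "v \<bullet> v"] by simp
qed

section \<open>Differential inequalities\<close>

lemma has_real_derivative_nonpos_imp_le:
  fixes f :: "real \<Rightarrow> real"
  assumes "a \<le> b"
    and "\<And>t. t \<in> {a..b} \<Longrightarrow> (f has_real_derivative f' t) (at t within {a..b})"
    and "\<And>t. t \<in> {a..b} \<Longrightarrow> f' t \<le> 0"
  shows "f b \<le> f a"
proof -
  obtain c where c: "c \<in> {a..b}" "f b - f a = f' c * (b - a)"
    using mvt_very_simple[OF assms(1), of f "\<lambda>t h. f' t * h"] assms(2)
    by (auto simp: has_field_derivative_def)
  have "f' c * (b - a) \<le> 0"
    using assms(1) assms(3)[OF c(1)] by (simp add: mult_nonpos_nonneg)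
  then show ?thesis
    using c(2) by simp
qed

lemma gronwall_vanishing:
  fixes W :: "real \<Rightarrow> real"
  assumes "0 \<le> t"
    and "\<And>s. s \<in> {0..t} \<Longrightarrow> (W has_real_derivative W' s) (at s within {0..t})"
    and "\<And>s. s \<in> {0..t} \<Longrightarrow> W' s \<le> K * W s"
    and "\<And>s. s \<in> {0..t} \<Longrightarrow> 0 \<le> W s"
    and "W 0 = 0"
  shows "W t = 0"
proof -
  define G where "G s = exp (- K * s) * W s" for s
  have "G t \<le> G 0"
  proof (rule has_real_derivative_nonpos_imp_le[OF assms(1)])
    fix s
    assume s: "s \<in> {0..t}"
    show "(G has_real_derivative exp (- K * s) * (W' s - K * W s)) (at s within {0..t})"
      unfolding G_def by (auto intro!: derivative_eq_intros assms(2)[OF s] simp: algebra_simps)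
    show "exp (- K * s) * (W' s - K * W s) \<le> 0"
      using assms(3)[OF s] by (simp add: mult_nonneg_nonpos)
  qed
  then have "W t \<le> 0"
    using assms(5) by (simp add: G_def mult_le_0_iff)
  then show ?thesis
    using assms(4)[of t] assms(1) by simp
qed

lemma has_real_derivative_min_0_power2:
  "((\<lambda>z::real. (min z 0)\<^sup>2) has_real_derivative 2 * min z 0) (at z)"
proof (cases z "0::real" rule: linorder_cases)
  case less
  have "((\<lambda>z::real. z\<^sup>2) has_real_derivative 2 * min z 0) (at z)"
    using less by (auto intro!: derivative_eq_intros)
  then show ?thesis
    by (rule has_field_derivative_transform_within_open[where S = "{..<0}"]) (use less in auto)
next
  case greater
  have "((\<lambda>z::real. 0) has_real_derivative 2 * min z 0) (at z)"
    using greater by (auto intro!: derivative_eq_intros)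
  then show ?thesis
    by (rule has_field_derivative_transform_within_open[where S = "{0<..}"]) (use greater in auto)
next
  case equal
  \<comment> \<open>At the kink, the difference quotient is squeezed between \<open>-|h|\<close> and \<open>|h|\<close>.\<close>
  have "((\<lambda>h::real. (min h 0)\<^sup>2 / h) \<longlongrightarrow> 0) (at 0)"
  proof (rule tendsto_sandwich[where f = "\<lambda>h. - \<bar>h\<bar>" and h = "\<lambda>h. \<bar>h\<bar>"])
    have bounds: "- \<bar>h\<bar> \<le> (min h 0)\<^sup>2 / h" "(min h 0)\<^sup>2 / h \<le> \<bar>h\<bar>" for h :: real
      by (cases "h < 0"; simp add: power2_eq_square min_def)+
    show "\<forall>\<^sub>F h in at (0::real). - \<bar>h\<bar> \<le> (min h 0)\<^sup>2 / h"
      by (intro always_eventually allI bounds)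
    show "\<forall>\<^sub>F h in at (0::real). (min h 0)\<^sup>2 / h \<le> \<bar>h\<bar>"
      by (intro always_eventually allI bounds)
  qed (auto intro!: tendsto_eq_intros)
  then show ?thesis
    unfolding equal DERIV_def by simp
qed

lemma nonneg_invariant_if_quasi_positive:
  fixes u u' :: "'i::finite \<Rightarrow> real \<Rightarrow> real"
  assumes "0 \<le> T"
    and deriv: "\<And>k t. t \<in> {0..T} \<Longrightarrow> (u k has_real_derivative u' k t) (at t within {0..T})"
    and quasi: "\<And>k t. t \<in> {0..T} \<Longrightarrow> min (u k t) 0 * u' k t \<le> K * (\<Sum>l\<in>UNIV. (min (u l t) 0)\<^sup>2)"
    and init: "\<And>k. 0 \<le> u k 0"
  shows "0 \<le> u k T"
proof -
  define W where "W t = (\<Sum>l\<in>UNIV. (min (u l t) 0)\<^sup>2)" for t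
  have "W T = 0"
  proof (rule gronwall_vanishing[OF assms(1)])
    fix t
    assume t: "t \<in> {0..T}"
    show "(W has_real_derivative (\<Sum>l\<in>UNIV. 2 * min (u l t) 0 * u' l t)) (at t within {0..T})"
      unfolding W_def
      by (intro DERIV_sum DERIV_chain'[OF deriv[OF t] has_real_derivative_min_0_power2, simplified])
    have "(\<Sum>l\<in>UNIV. 2 * min (u l t) 0 * u' l t) \<le> (\<Sum>l\<in>(UNIV :: 'i set). 2 * K * W t)"
      using quasi[OF t] unfolding W_def by (intro sum_mono) (simp add: mult.assoc)
    then show "(\<Sum>l\<in>UNIV. 2 * min (u l t) 0 * u' l t) \<le> (2 * CARD('i) * K) * W t"
      by simp
    show "0 \<le> W t"
      unfolding W_def by (simp add: sum_nonneg)
  next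
    show "W 0 = 0"
      using init unfolding W_def by (simp add: min_absorb2)
  qed
  then have "(min (u k T) 0)\<^sup>2 = 0"
    unfolding W_def by (simp add: sum_nonneg_eq_0_iff)
  then show ?thesis
    by simp
qed

lemma continuous_on_if_has_vector_derivative:
  assumes "\<And>t. t \<in> S \<Longrightarrow> (x has_vector_derivative X t) (at t within S)"
  shows "continuous_on S x"
  using assms has_vector_derivative_continuous continuous_on_eq_continuous_within by blast

lemma lyapunov_tendsto_0:
  fixes V V' :: "real \<Rightarrow> real"
  assumes deriv: "\<And>t. 0 \<le> t \<Longrightarrow> (V has_real_derivative V' t) (at t within {0..})"
    and nonneg: "\<And>t. 0 \<le> t \<Longrightarrow> 0 \<le> V t"
    and decreasing: "\<And>t. 0 \<le> t \<Longrightarrow> V' t \<le> 0"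
    and strict: "\<And>\<epsilon>. 0 < \<epsilon> \<Longrightarrow> \<exists>\<mu>>0. \<forall>t\<ge>0. \<epsilon> \<le> V t \<longrightarrow> V' t \<le> - \<mu>"
  shows "(V \<longlongrightarrow> 0) at_top"
proof -
  have deriv_on: "(V has_real_derivative V' t) (at t within {a..b})" if "0 \<le> a" "t \<in> {a..b}" for a b t
    using deriv[of t] that by (auto intro: DERIV_subset)
  have antimono: "V b \<le> V a" if "0 \<le> a" "a \<le> b" for a b
    using that by (intro has_real_derivative_nonpos_imp_le[OF _ deriv_on decreasing]) auto
  have "\<exists>T\<ge>0. V T < \<epsilon>" if "0 < \<epsilon>" for \<epsilon>
  proof (rule ccontr)
    assume "\<not> ?thesis"
    then have big: "\<epsilon> \<le> V t" if "0 \<le> t" for t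
      using that by force
    obtain \<mu> where "0 < \<mu>" and \<mu>: "\<And>t. 0 \<le> t \<Longrightarrow> V' t \<le> - \<mu>"
      using strict[OF \<open>0 < \<epsilon>\<close>] big by blast
    define t where "t = (V 0 + 1) / \<mu>"
    have "0 \<le> t"
      using nonneg[of 0] \<open>0 < \<mu>\<close> by (simp add: t_def)
    have "V t + \<mu> * t \<le> V 0 + \<mu> * 0"
    proof (rule has_real_derivative_nonpos_imp_le[OF \<open>0 \<le> t\<close>])
      fix s
      assume "s \<in> {0..t}"
      then show "((\<lambda>s. V s + \<mu> * s) has_real_derivative V' s + \<mu>) (at s within {0..t})"
        by (auto intro!: derivative_eq_intros deriv_on)
      show "V' s + \<mu> \<le> 0"
        using \<mu> \<open>s \<in> {0..t}\<close> by fastforce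
    qed
    moreover have "\<mu> * t = V 0 + 1"
      using \<open>0 < \<mu>\<close> by (simp add: t_def)
    ultimately show False
      using nonneg[OF \<open>0 \<le> t\<close>] by simp
  qed
  then have "\<forall>\<^sub>F t in at_top. dist (V t) 0 < \<epsilon>" if "0 < \<epsilon>" for \<epsilon>
    using that antimono nonneg unfolding eventually_at_top_linorder
    by (metis dual_order.trans le_less_trans abs_of_nonneg dist_real_def diff_zero)
  then show ?thesis
    by (rule tendstoI)
qed

section \<open>Forward invariance of the domain\<close>

lemma min_0_mult_le:
  fixes a b c :: real
  shows "min a 0 * (b * c) \<le> \<bar>c\<bar> * (min a 0 * min b 0) + \<bar>b\<bar> * (min a 0 * min c 0)"
  by (cases "a < 0"; cases "b < 0"; cases "c < 0")
    (simp_all add: min_def abs_if mult_le_0_iff zero_le_mult_iff algebra_simps)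

lemma mult_le_if_power2_le:
  fixes a b w :: real
  assumes "a\<^sup>2 \<le> w" and "b\<^sup>2 \<le> w"
  shows "a * b \<le> w"
  using sum_squares_bound[of a b] assms by (simp add: power2_eq_square)

lemma min_0_matrix_vector_mult_le:
  fixes A :: "real ^ 'n ^ 'n" and a w :: real
  assumes A01: "\<And>i j. 0 \<le> A $ i $ j \<and> A $ i $ j \<le> 1"
    and le: "\<And>j. min a 0 * min (v $ j) 0 \<le> w"
  shows "min a 0 * min ((A *v v) $ i) 0 \<le> CARD('n) * w"
proof -
  have "min (v $ j) 0 \<le> A $ i $ j * v $ j" for j
    using A01[of i j] mult_right_mono_neg[of "A $ i $ j" 1 "v $ j"] by (cases "v $ j < 0") auto
  then have "(\<Sum>j\<in>UNIV. min (v $ j) 0) \<le> min ((A *v v) $ i) 0"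
    unfolding matrix_vector_mult_def by (auto intro: sum_mono sum_nonpos)
  then have "min a 0 * min ((A *v v) $ i) 0 \<le> min a 0 * (\<Sum>j\<in>UNIV. min (v $ j) 0)"
    by (rule mult_left_mono_neg) simp
  also have "\<dots> = (\<Sum>j\<in>UNIV. min a 0 * min (v $ j) 0)"
    by (simp add: sum_distrib_left)
  also have "\<dots> \<le> (\<Sum>j\<in>(UNIV :: 'n set). w)"
    by (intro sum_mono le)
  finally show ?thesis
    by simp
qed

lemma diagm_mult_vec_nth: "(diagm v *v u) $ i = v $ i * u $ i"
proof -
  have "(diagm v *v u) $ i = (\<Sum>j\<in>UNIV. (if i = j then v $ i else 0) * u $ j)"
    by (simp add: diagm_def matrix_vector_mult_def)
  also have "\<dots> = (\<Sum>j\<in>UNIV. if j = i then v $ i * u $ j else 0)"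
    by (intro sum.cong) auto
  finally show ?thesis
    by simp
qed

lemma biv_field_x_nth:
  "biv_field_x \<beta> \<delta> A x y $ i = \<beta> * ((1 - x $ i - y $ i) * (A *v x) $ i) - \<delta> * x $ i"
  by (simp add: biv_field_x_def diagm_mult_vec_nth)

text \<open>In the \<open>3N\<close> coordinates \<open>x\<^sub>i\<close>, \<open>y\<^sub>i\<close>, \<open>1 - x\<^sub>i - y\<^sub>i\<close>, indexed by \<open>'n + 'n + 'n\<close>,
  the domain D is the nonnegative orthant.\<close>

definition biv_coords :: "real ^ 'n \<Rightarrow> real ^ 'n \<Rightarrow> 'n + 'n + 'n \<Rightarrow> real" where
  "biv_coords x y = case_sum (\<lambda>i. x $ i) (case_sum (\<lambda>i. y $ i) (\<lambda>i. 1 - x $ i - y $ i))"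

definition biv_coords_velocity :: "real ^ 'n \<Rightarrow> real ^ 'n \<Rightarrow> 'n + 'n + 'n \<Rightarrow> real" where
  "biv_coords_velocity X Y = case_sum (\<lambda>i. X $ i) (case_sum (\<lambda>i. Y $ i) (\<lambda>i. - X $ i - Y $ i))"

lemma biv_coords_simps [simp]:
  "biv_coords x y (Inl i) = x $ i"
  "biv_coords x y (Inr (Inl i)) = y $ i"
  "biv_coords x y (Inr (Inr i)) = 1 - x $ i - y $ i"
  "biv_coords_velocity X Y (Inl i) = X $ i"
  "biv_coords_velocity X Y (Inr (Inl i)) = Y $ i"
  "biv_coords_velocity X Y (Inr (Inr i)) = - X $ i - Y $ i"
  by (simp_all add: biv_coords_def biv_coords_velocity_def)

lemma biv_coords_cases:
  obtains i where "k = Inl i" | i where "k = Inr (Inl i)" | i where "k = Inr (Inr i)"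
  by (metis sum.exhaust)

lemma biv_domain_iff_biv_coords_nonneg:
  "(x, y) \<in> biv_domain \<longleftrightarrow> (\<forall>k. 0 \<le> biv_coords x y k)"
proof -
  have "(0 \<le> x $ i \<and> x $ i \<le> 1 \<and> 0 \<le> y $ i \<and> y $ i \<le> 1 \<and> x $ i + y $ i \<le> 1)
      \<longleftrightarrow> (0 \<le> x $ i \<and> 0 \<le> y $ i \<and> 0 \<le> 1 - x $ i - y $ i)" for i
    by auto
  then show ?thesis
    unfolding biv_domain_def split_sum_all by (simp flip: all_conj_distrib)
qed

lemma has_real_derivative_biv_coords:
  assumes "(x has_vector_derivative X) F" and "(y has_vector_derivative Y) F"
  shows "((\<lambda>t. biv_coords (x t) (y t) k) has_real_derivative biv_coords_velocity X Y k) F"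
proof -
  have comp: "((\<lambda>t. z t $ i) has_real_derivative Z $ i) F"
    if "(z has_vector_derivative Z) F" for z :: "real \<Rightarrow> real ^ 'n" and Z i
    using bounded_linear.has_vector_derivative[OF bounded_linear_vec_nth that]
    by (simp add: has_real_derivative_iff_has_vector_derivative)
  show ?thesis
    by (cases k rule: biv_coords_cases)
      (auto intro!: derivative_eq_intros comp assms)
qed

lemma biv_field_x_quasi_positive:
  fixes A :: "real ^ 'n ^ 'n" and \<beta> \<delta> C W :: real
  assumes A01: "\<And>i j. 0 \<le> A $ i $ j \<and> A $ i $ j \<le> 1"
    and "0 \<le> \<beta>" "0 \<le> \<delta>" "0 \<le> C"
    and "\<bar>1 - x $ i - y $ i\<bar> \<le> C" "\<bar>(A *v x) $ i\<bar> \<le> C"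
    and "min (x $ i) 0 * min (1 - x $ i - y $ i) 0 \<le> W"
    and "\<And>j. min (x $ i) 0 * min (x $ j) 0 \<le> W"
  shows "min (x $ i) 0 * biv_field_x \<beta> \<delta> A x y $ i \<le> \<beta> * C * (1 + real CARD('n)) * W"
proof -
  let ?a = "min (x $ i) 0" and ?s = "1 - x $ i - y $ i" and ?r = "(A *v x) $ i"
  have nonneg: "0 \<le> ?a * min ?s 0" "0 \<le> ?a * min ?r 0" "0 \<le> ?a * x $ i"
    by (simp_all add: mult_nonpos_nonpos min_def)
  have "?a * (?s * ?r) \<le> \<bar>?r\<bar> * (?a * min ?s 0) + \<bar>?s\<bar> * (?a * min ?r 0)"
    by (rule min_0_mult_le)
  also have "\<dots> \<le> C * (?a * min ?s 0) + C * (?a * min ?r 0)"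
    using assms(5,6) nonneg by (intro add_mono mult_right_mono)
  also have "\<dots> = C * (?a * min ?s 0 + ?a * min ?r 0)"
    by (simp add: distrib_left)
  also have "\<dots> \<le> C * (W + CARD('n) * W)"
    by (intro mult_left_mono add_mono assms(4,7) min_0_matrix_vector_mult_le[OF A01 assms(8)])
  also have "\<dots> = C * (1 + real CARD('n)) * W"
    by (simp add: algebra_simps)
  finally have "\<beta> * (?a * (?s * ?r)) \<le> \<beta> * (C * (1 + real CARD('n)) * W)"
    using assms(2) by (rule mult_left_mono)
  moreover have "0 \<le> \<delta> * (?a * x $ i)"
    using assms(3) nonneg(3) by simp
  moreover have "?a * biv_field_x \<beta> \<delta> A x y $ i = \<beta> * (?a * (?s * ?r)) - \<delta> * (?a * x $ i)"
    unfolding biv_field_x_nth by (simp add: algebra_simps)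
  ultimately show ?thesis
    by (simp add: mult.assoc)
qed

lemma biv_quasi_positive:
  fixes A B :: "real ^ 'n ^ 'n" and x y :: "real ^ 'n" and \<beta>1 \<delta>1 \<beta>2 \<delta>2 C :: real
  assumes A01: "\<And>i j. 0 \<le> A $ i $ j \<and> A $ i $ j \<le> 1"
    and B01: "\<And>i j. 0 \<le> B $ i $ j \<and> B $ i $ j \<le> 1"
    and params: "0 \<le> \<beta>1" "0 \<le> \<delta>1" "0 \<le> \<beta>2" "0 \<le> \<delta>2" "0 \<le> C"
    and bounds: "\<And>i. \<bar>1 - x $ i - y $ i\<bar> \<le> C" "\<And>i. \<bar>(A *v x) $ i\<bar> \<le> C"
      "\<And>i. \<bar>(B *v y) $ i\<bar> \<le> C"
  shows "min (biv_coords x y k) 0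
      * biv_coords_velocity (biv_field_x \<beta>1 \<delta>1 A x y) (biv_field_x \<beta>2 \<delta>2 B y x) k
    \<le> ((\<beta>1 + \<beta>2) * C * (1 + real CARD('n)) + \<delta>1 + \<delta>2) * (\<Sum>l\<in>UNIV. (min (biv_coords x y l) 0)\<^sup>2)"
proof -
  define W where "W = (\<Sum>l\<in>UNIV. (min (biv_coords x y l) 0)\<^sup>2)"
  define N :: real where "N = CARD('n)"
  have "0 \<le> W" "0 \<le> N"
    unfolding W_def N_def by (simp_all add: sum_nonneg)
  have prod: "min (biv_coords x y k) 0 * min (biv_coords x y l) 0 \<le> W" for k l
    unfolding W_def by (intro mult_le_if_power2_le member_le_sum) simp_all
  have X: "min (x $ i) 0 * biv_field_x \<beta>1 \<delta>1 A x y $ i \<le> \<beta>1 * C * (1 + N) * W" for i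
    using biv_field_x_quasi_positive[OF A01 params(1,2,5) bounds(1,2), of i W]
      prod[of "Inl i" "Inr (Inr i)"] prod[of "Inl i" "Inl _"]
    by (simp add: N_def)
  have Y: "min (y $ i) 0 * biv_field_x \<beta>2 \<delta>2 B y x $ i \<le> \<beta>2 * C * (1 + N) * W" for i
    using biv_field_x_quasi_positive[OF B01 params(3,4,5), of y i x W] bounds(1,3)[of i]
      prod[of "Inr (Inl i)" "Inr (Inr i)"] prod[of "Inr (Inl i)" "Inr (Inl _)"]
    by (simp add: N_def algebra_simps)
  have S: "min (1 - x $ i - y $ i) 0 * (- biv_field_x \<beta>1 \<delta>1 A x y $ i - biv_field_x \<beta>2 \<delta>2 B y x $ i)
      \<le> ((\<beta>1 + \<beta>2) * C + \<delta>1 + \<delta>2) * W" for i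
  proof -
    let ?s = "1 - x $ i - y $ i"
    have sq: "0 \<le> min ?s 0 * ?s" "min ?s 0 * ?s \<le> W"
      using prod[of "Inr (Inr i)" "Inr (Inr i)"] \<open>0 \<le> W\<close> by (auto simp: min_def)
    have slack: "min ?s 0 * (\<delta> * a - \<beta> * (?s * r)) \<le> \<beta> * C * W + \<delta> * W"
      if "0 \<le> \<beta>" "0 \<le> \<delta>" "\<bar>r\<bar> \<le> C" "min ?s 0 * min a 0 \<le> W" for \<beta> \<delta> a r
    proof -
      have "min ?s 0 * a \<le> min ?s 0 * min a 0"
        by (rule mult_left_mono_neg) simp_all
      then have a: "min ?s 0 * a \<le> W"
        using that(4) by linarith
      have "min ?s 0 * ?s * (- r) \<le> min ?s 0 * ?s * C"
        using sq(1) that(3) by (intro mult_left_mono) auto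
      also have "\<dots> \<le> W * C"
        using sq(2) params(5) by (rule mult_right_mono)
      finally have r: "min ?s 0 * ?s * (- r) \<le> C * W"
        by (simp add: mult.commute)
      have "min ?s 0 * (\<delta> * a - \<beta> * (?s * r)) = \<delta> * (min ?s 0 * a) + \<beta> * (min ?s 0 * ?s * (- r))"
        by (simp add: algebra_simps)
      also have "\<dots> \<le> \<delta> * W + \<beta> * (C * W)"
        using that(1,2) a r by (intro add_mono mult_left_mono)
      finally show ?thesis
        by (simp add: algebra_simps)
    qed
    have "min ?s 0 * (\<delta>1 * x $ i - \<beta>1 * (?s * (A *v x) $ i)) \<le> \<beta>1 * C * W + \<delta>1 * W"
      using prod[of "Inr (Inr i)" "Inl i"] by (intro slack params(1,2) bounds(2)) simp
    moreover have "min ?s 0 * (\<delta>2 * y $ i - \<beta>2 * (?s * (B *v y) $ i)) \<le> \<beta>2 * C * W + \<delta>2 * W"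
      using prod[of "Inr (Inr i)" "Inr (Inl i)"] by (intro slack params(3,4) bounds(3)) simp
    moreover have "min ?s 0 * (- biv_field_x \<beta>1 \<delta>1 A x y $ i - biv_field_x \<beta>2 \<delta>2 B y x $ i)
        = min ?s 0 * (\<delta>1 * x $ i - \<beta>1 * (?s * (A *v x) $ i))
          + min ?s 0 * (\<delta>2 * y $ i - \<beta>2 * (?s * (B *v y) $ i))"
      unfolding biv_field_x_nth by (simp add: algebra_simps)
    ultimately show ?thesis
      by (simp add: algebra_simps)
  qed
  define K where "K = (\<beta>1 + \<beta>2) * C * (1 + N) + \<delta>1 + \<delta>2"
  have "0 \<le> \<beta>1 * C" "0 \<le> \<beta>2 * C" "0 \<le> \<beta>1 * C * N" "0 \<le> \<beta>2 * C * N"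
    using params \<open>0 \<le> N\<close> by simp_all
  then have "\<beta>1 * C * (1 + N) \<le> K" "\<beta>2 * C * (1 + N) \<le> K" "(\<beta>1 + \<beta>2) * C + \<delta>1 + \<delta>2 \<le> K"
    using params unfolding K_def by (simp_all add: algebra_simps)
  then have KW: "\<beta>1 * C * (1 + N) * W \<le> K * W" "\<beta>2 * C * (1 + N) * W \<le> K * W"
    "((\<beta>1 + \<beta>2) * C + \<delta>1 + \<delta>2) * W \<le> K * W"
    using \<open>0 \<le> W\<close> by (simp_all add: mult_right_mono)
  have "min (biv_coords x y k) 0
      * biv_coords_velocity (biv_field_x \<beta>1 \<delta>1 A x y) (biv_field_x \<beta>2 \<delta>2 B y x) k \<le> K * W"
    by (cases k rule: biv_coords_cases)
      (simp_all add: order_trans[OF X KW(1)] order_trans[OF Y KW(2)] order_trans[OF S KW(3)])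
  then show ?thesis
    unfolding K_def W_def N_def .
qed

lemma biv_domain_invariant:
  fixes A B :: "real ^ 'n ^ 'n" and x y :: "real \<Rightarrow> real ^ 'n"
  assumes A01: "\<And>i j. 0 \<le> A $ i $ j \<and> A $ i $ j \<le> 1"
    and B01: "\<And>i j. 0 \<le> B $ i $ j \<and> B $ i $ j \<le> 1"
    and params: "0 \<le> \<beta>1" "0 \<le> \<delta>1" "0 \<le> \<beta>2" "0 \<le> \<delta>2"
    and init: "(x 0, y 0) \<in> biv_domain"
    and dx: "\<And>t. 0 \<le> t \<Longrightarrow>
      (x has_vector_derivative biv_field_x \<beta>1 \<delta>1 A (x t) (y t)) (at t within {0..})"
    and dy: "\<And>t. 0 \<le> t \<Longrightarrow>
      (y has_vector_derivative biv_field_x \<beta>2 \<delta>2 B (y t) (x t)) (at t within {0..})"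
    and "0 \<le> T"
  shows "(x T, y T) \<in> biv_domain"
proof -
  have dxT: "(x has_vector_derivative biv_field_x \<beta>1 \<delta>1 A (x t) (y t)) (at t within {0..T})"
    and dyT: "(y has_vector_derivative biv_field_x \<beta>2 \<delta>2 B (y t) (x t)) (at t within {0..T})"
    if "t \<in> {0..T}" for t
    using that by (auto intro: has_vector_derivative_within_subset[OF dx] has_vector_derivative_within_subset[OF dy])
  have cx: "continuous_on {0..T} x"
    by (rule continuous_on_if_has_vector_derivative[OF dxT])
  have cy: "continuous_on {0..T} y"
    by (rule continuous_on_if_has_vector_derivative[OF dyT])
  have "continuous_on {0..T} (\<lambda>t. (x t, y t, A *v x t, B *v y t))"
    by (intro continuous_on_Pair cx cy
        bounded_linear.continuous_on[OF matrix_vector_mul_bounded_linear])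
  then have "bounded ((\<lambda>t. (x t, y t, A *v x t, B *v y t)) ` {0..T})"
    by (intro compact_imp_bounded compact_continuous_image compact_Icc)
  then obtain M where M: "\<And>t. t \<in> {0..T} \<Longrightarrow> norm (x t, y t, A *v x t, B *v y t) \<le> M"
    unfolding bounded_iff by blast
  define C where "C = 1 + 2 * M"
  have "0 \<le> C"
    using order_trans[OF norm_ge_zero M[of 0]] \<open>0 \<le> T\<close> by (simp add: C_def)
  have bounds: "\<bar>1 - x t $ i - y t $ i\<bar> \<le> C" "\<bar>(A *v x t) $ i\<bar> \<le> C" "\<bar>(B *v y t) $ i\<bar> \<le> C"
    if "t \<in> {0..T}" for t i
  proof -
    have "norm (x t) \<le> M" "norm (y t) \<le> M" "norm (A *v x t) \<le> M" "norm (B *v y t) \<le> M"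
      using M[OF that] by (meson norm_fst_le norm_snd_le order_trans)+
    moreover have "\<bar>z $ i\<bar> \<le> norm z" for z :: "real ^ 'n"
      by (rule component_le_norm_cart)
    ultimately show "\<bar>1 - x t $ i - y t $ i\<bar> \<le> C" "\<bar>(A *v x t) $ i\<bar> \<le> C" "\<bar>(B *v y t) $ i\<bar> \<le> C"
      unfolding C_def by (smt (verit))+
  qed
  have "0 \<le> biv_coords (x T) (y T) k" for k
  proof (rule nonneg_invariant_if_quasi_positive[OF \<open>0 \<le> T\<close>])
    fix k and t :: real
    assume t: "t \<in> {0..T}"
    show "((\<lambda>t. biv_coords (x t) (y t) k) has_real_derivative
        biv_coords_velocity (biv_field_x \<beta>1 \<delta>1 A (x t) (y t)) (biv_field_x \<beta>2 \<delta>2 B (y t) (x t)) k)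
        (at t within {0..T})"
      by (rule has_real_derivative_biv_coords[OF dxT[OF t] dyT[OF t]])
    show "min (biv_coords (x t) (y t) k) 0
        * biv_coords_velocity (biv_field_x \<beta>1 \<delta>1 A (x t) (y t)) (biv_field_x \<beta>2 \<delta>2 B (y t) (x t)) k
      \<le> ((\<beta>1 + \<beta>2) * C * (1 + real CARD('n)) + \<delta>1 + \<delta>2)
        * (\<Sum>l\<in>UNIV. (min (biv_coords (x t) (y t) l) 0)\<^sup>2)"
      by (rule biv_quasi_positive[OF A01 B01 params \<open>0 \<le> C\<close> bounds[OF t]])
  next
    show "0 \<le> biv_coords (x 0) (y 0) k" for k
      using init biv_domain_iff_biv_coords_nonneg by blast
  qed
  then show ?thesis
    using biv_domain_iff_biv_coords_nonneg by blast
qed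

section \<open>Convergence to the disease-free state\<close>

lemma matrix_vector_mult_nonneg:
  fixes A :: "real ^ 'n ^ 'n"
  assumes "\<And>i j. 0 \<le> A $ i $ j" and "\<And>j. 0 \<le> z $ j"
  shows "0 \<le> (A *v z) $ i"
  unfolding matrix_vector_mult_def using assms by (simp add: sum_nonneg)

definition biv_decay :: "real \<Rightarrow> real ^ 'n ^ 'n \<Rightarrow> real ^ 'n \<Rightarrow> real" where
  "biv_decay \<rho> A z = \<rho> * (z \<bullet> z) - z \<bullet> (A *v z) + (\<Sum>i\<in>UNIV. (z $ i)\<^sup>2 * (A *v z) $ i)"

lemma inner_biv_field_x_le:
  fixes A :: "real ^ 'n ^ 'n"
  assumes "\<And>i j. 0 \<le> A $ i $ j" and "\<And>i. 0 \<le> x $ i" and "\<And>i. 0 \<le> y $ i" and "0 < \<beta>"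
  shows "x \<bullet> biv_field_x \<beta> \<delta> A x y \<le> - \<beta> * biv_decay (\<delta> / \<beta>) A x"
proof -
  let ?r = "\<lambda>i. (A *v x) $ i"
  have "x \<bullet> biv_field_x \<beta> \<delta> A x y
      = - \<beta> * biv_decay (\<delta> / \<beta>) A x - \<beta> * (\<Sum>i\<in>UNIV. x $ i * y $ i * ?r i)"
    using assms(4)
    by (simp add: biv_decay_def inner_vec_def biv_field_x_nth power2_eq_square algebra_simps
        sum_distrib_left sum_subtractf flip: sum.distrib)
  moreover have "0 \<le> \<beta> * (\<Sum>i\<in>UNIV. x $ i * y $ i * ?r i)"
    using assms matrix_vector_mult_nonneg[of A x] by (simp add: sum_nonneg)
  ultimately show ?thesis
    by linarith
qed

lemma biv_decay_pos:
  fixes A :: "real ^ 'n ^ 'n"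
  assumes sym: "\<And>i j. A $ i $ j = A $ j $ i" and A0: "\<And>i j. 0 \<le> A $ i $ j"
    and "lambda_max A \<le> \<rho>" and "0 < \<rho>"
    and z0: "\<And>i. 0 \<le> z $ i" and "z \<noteq> 0"
  shows "0 < biv_decay \<rho> A z"
proof (rule ccontr)
  let ?m = "lambda_max A"
  assume "\<not> 0 < biv_decay \<rho> A z"
  moreover have "?m * (z \<bullet> z) \<le> \<rho> * (z \<bullet> z)"
    using assms(3) by (simp add: mult_right_mono)
  moreover have "z \<bullet> (A *v z) \<le> ?m * (z \<bullet> z)"
    by (rule quadratic_form_le_lambda_max[OF sym])
  moreover have "0 \<le> (\<Sum>i\<in>UNIV. (z $ i)\<^sup>2 * (A *v z) $ i)"
    using matrix_vector_mult_nonneg[OF A0 z0] by (simp add: sum_nonneg)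
  ultimately have "?m * (z \<bullet> z) = \<rho> * (z \<bullet> z)" and "z \<bullet> (A *v z) = ?m * (z \<bullet> z)"
    and sum0: "(\<Sum>i\<in>UNIV. (z $ i)\<^sup>2 * (A *v z) $ i) = 0"
    unfolding biv_decay_def by linarith+
  \<comment> \<open>Equality in the Rayleigh bound makes \<open>z\<close> a nonnegative eigenvector for \<open>\<rho>\<close>.\<close>
  then have "?m = \<rho>" and "A *v z = ?m *\<^sub>R z"
    using \<open>z \<noteq> 0\<close> quadratic_form_maximizer_is_eigenvector[OF sym quadratic_form_le_lambda_max[OF sym]]
    by auto
  then have "(\<Sum>i\<in>UNIV. (z $ i)\<^sup>2 * (A *v z) $ i) = \<rho> * (\<Sum>i\<in>UNIV. (z $ i) ^ 3)"
    by (simp add: sum_distrib_left power2_eq_square power3_eq_cube algebra_simps)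
  moreover obtain j where "z $ j \<noteq> 0"
    using \<open>z \<noteq> 0\<close> by (metis vec_eq_iff zero_index)
  then have "0 < (\<Sum>i\<in>UNIV. (z $ i) ^ 3)"
    using z0 by (intro sum_pos2[of UNIV j]) (auto simp: order_less_le)
  ultimately show False
    using sum0 \<open>0 < \<rho>\<close> by simp
qed

lemma biv_decay_bounded_below:
  fixes A :: "real ^ 'n ^ 'n"
  assumes sym: "\<And>i j. A $ i $ j = A $ j $ i" and A0: "\<And>i j. 0 \<le> A $ i $ j"
    and "lambda_max A \<le> \<rho>" and "0 < \<rho>" and "0 < \<epsilon>"
  obtains \<mu> where "0 < \<mu>"
    and "\<And>z. (\<forall>i. 0 \<le> z $ i \<and> z $ i \<le> 1) \<Longrightarrow> \<epsilon> \<le> z \<bullet> z \<Longrightarrow> \<mu> \<le> biv_decay \<rho> A z"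
proof -
  define K where "K = cbox 0 1 \<inter> {z :: real ^ 'n. \<epsilon> \<le> z \<bullet> z}"
  have K: "z \<in> K \<longleftrightarrow> (\<forall>i. 0 \<le> z $ i \<and> z $ i \<le> 1) \<and> \<epsilon> \<le> z \<bullet> z" for z
    by (simp add: K_def mem_box_cart)
  show ?thesis
  proof (cases "K = {}")
    case True
    then show ?thesis
      using K that[of 1] by auto
  next
    case False
    have "compact K"
      unfolding K_def by (intro compact_Int_closed compact_cbox closed_Collect_le continuous_intros)
    moreover have "continuous_on K (biv_decay \<rho> A)"
      unfolding biv_decay_def
      by (intro continuous_intros linear_continuous_on matrix_vector_mul_bounded_linear
          bounded_linear_compose[OF bounded_linear_vec_nth matrix_vector_mul_bounded_linear])
    ultimately obtain z where z: "z \<in> K" "\<And>w. w \<in> K \<Longrightarrow> biv_decay \<rho> A z \<le> biv_decay \<rho> A w"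
      using continuous_attains_inf[OF _ False] by metis
    have "z \<noteq> 0"
      using z(1) \<open>0 < \<epsilon>\<close> K by auto
    then have "0 < biv_decay \<rho> A z"
      using z(1) K by (intro biv_decay_pos[OF sym A0 assms(3,4)]) auto
    then show ?thesis
      using that z(2) K by blast
  qed
qed

lemma biv_component_tendsto_0:
  fixes A :: "real ^ 'n ^ 'n" and x y :: "real \<Rightarrow> real ^ 'n"
  assumes sym: "\<And>i j. A $ i $ j = A $ j $ i" and A0: "\<And>i j. 0 \<le> A $ i $ j"
    and "0 < \<beta>" and "0 < \<delta>" and threshold: "(\<beta> / \<delta>) * lambda_max A \<le> 1"
    and dom: "\<And>t. 0 \<le> t \<Longrightarrow> (x t, y t) \<in> biv_domain"
    and dx: "\<And>t. 0 \<le> t \<Longrightarrow>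
      (x has_vector_derivative biv_field_x \<beta> \<delta> A (x t) (y t)) (at t within {0..})"
  shows "(x \<longlongrightarrow> 0) at_top"
proof -
  define \<rho> where "\<rho> = \<delta> / \<beta>"
  have "0 < \<rho>" "lambda_max A \<le> \<rho>"
    using assms(3,4) threshold by (simp_all add: \<rho>_def field_simps)
  define V' where "V' t = 2 * (x t \<bullet> biv_field_x \<beta> \<delta> A (x t) (y t))" for t
  have nonneg: "0 \<le> x t $ i" "0 \<le> y t $ i" "x t $ i \<le> 1" if "0 \<le> t" for t i
    using dom[OF that] by (auto simp: biv_domain_def)
  have V'_le: "V' t \<le> - (2 * \<beta> * biv_decay \<rho> A (x t))" if "0 \<le> t" for t
    using inner_biv_field_x_le[OF A0 nonneg(1,2)[OF that] \<open>0 < \<beta>\<close>]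
    by (simp add: V'_def \<rho>_def)
  have "((\<lambda>t. x t \<bullet> x t) \<longlongrightarrow> 0) at_top"
  proof (rule lyapunov_tendsto_0)
    fix t :: real
    assume "0 \<le> t"
    show "((\<lambda>t. x t \<bullet> x t) has_real_derivative V' t) (at t within {0..})"
      using bounded_bilinear.has_vector_derivative[OF bounded_bilinear_inner dx[OF \<open>0 \<le> t\<close>] dx[OF \<open>0 \<le> t\<close>]]
      by (simp add: V'_def has_real_derivative_iff_has_vector_derivative inner_commute)
    show "0 \<le> x t \<bullet> x t"
      by simp
    have "0 \<le> biv_decay \<rho> A (x t)"
      using biv_decay_pos[OF sym A0 \<open>lambda_max A \<le> \<rho>\<close> \<open>0 < \<rho>\<close> nonneg(1)[OF \<open>0 \<le> t\<close>]]
      by (cases "x t = 0") (auto simp: biv_decay_def less_imp_le)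
    then have "0 \<le> 2 * \<beta> * biv_decay \<rho> A (x t)"
      using \<open>0 < \<beta>\<close> by simp
    then show "V' t \<le> 0"
      using V'_le[OF \<open>0 \<le> t\<close>] by linarith
  next
    fix \<epsilon> :: real
    assume "0 < \<epsilon>"
    then obtain \<mu> where "0 < \<mu>"
      and \<mu>: "\<And>z. (\<forall>i. 0 \<le> z $ i \<and> z $ i \<le> 1) \<Longrightarrow> \<epsilon> \<le> z \<bullet> z \<Longrightarrow> \<mu> \<le> biv_decay \<rho> A z"
      using biv_decay_bounded_below[OF sym A0 \<open>lambda_max A \<le> \<rho>\<close> \<open>0 < \<rho>\<close>] by metis
    have "V' t \<le> - (2 * \<beta> * \<mu>)" if "0 \<le> t" "\<epsilon> \<le> x t \<bullet> x t" for t
    proof -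
      have "2 * \<beta> * \<mu> \<le> 2 * \<beta> * biv_decay \<rho> A (x t)"
        using \<mu>[of "x t"] nonneg[OF that(1)] that(2) \<open>0 < \<beta>\<close> by (intro mult_left_mono) auto
      then show ?thesis
        using V'_le[OF that(1)] by linarith
    qed
    then show "\<exists>\<mu>>0. \<forall>t\<ge>0. \<epsilon> \<le> x t \<bullet> x t \<longrightarrow> V' t \<le> - \<mu>"
      using \<open>0 < \<beta>\<close> \<open>0 < \<mu>\<close> by (intro exI[of _ "2 * \<beta> * \<mu>"]) auto
  qed
  then have "((\<lambda>t. norm (x t)) \<longlongrightarrow> 0) at_top"
    using tendsto_real_sqrt by (fastforce simp: norm_eq_sqrt_inner)
  then show ?thesis
    by (simp add: tendsto_norm_zero_iff)
qed

lemma undirected_adjacencyD: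
  assumes "undirected_adjacency A"
  shows "A $ i $ j = A $ j $ i" and "0 \<le> A $ i $ j \<and> A $ i $ j \<le> 1"
proof -
  show "A $ i $ j = A $ j $ i"
    using assms unfolding undirected_adjacency_def by blast
  have "A $ i $ j = 0 \<or> A $ i $ j = 1"
    using assms unfolding undirected_adjacency_def by blast
  then show "0 \<le> A $ i $ j \<and> A $ i $ j \<le> 1"
    by auto
qed

lemma biv_domain_swap: "(x, y) \<in> biv_domain \<Longrightarrow> (y, x) \<in> biv_domain"
  unfolding biv_domain_def by (auto simp: add.commute)

theorem theorem2:
  fixes A B :: "real ^ 'n ^ 'n"
    and \<beta>1 \<delta>1 \<beta>2 \<delta>2 :: real
    and x y :: "real \<Rightarrow> real ^ 'n"
  assumes "undirected_adjacency A" and "connected_adjacency A"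
    and "undirected_adjacency B" and "connected_adjacency B"
    and "\<beta>1 > 0" and "\<delta>1 > 0" and "\<beta>2 > 0" and "\<delta>2 > 0"
    and "(\<beta>1 / \<delta>1) * lambda_max A \<le> 1"
    and "(\<beta>2 / \<delta>2) * lambda_max B \<le> 1"
    and "(x 0, y 0) \<in> biv_domain"
    and "\<And>t. t \<ge> 0 \<Longrightarrow>
           (x has_vector_derivative biv_field_x \<beta>1 \<delta>1 A (x t) (y t)) (at t within {0..})"
    and "\<And>t. t \<ge> 0 \<Longrightarrow>
           (y has_vector_derivative biv_field_x \<beta>2 \<delta>2 B (y t) (x t)) (at t within {0..})"
  shows "((\<lambda>t. (x t, y t)) \<longlongrightarrow> (0, 0)) at_top"
proof -
  note A = undirected_adjacencyD[OF assms(1)] and B = undirected_adjacencyD[OF assms(3)]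
  have dom: "(x t, y t) \<in> biv_domain" if "0 \<le> t" for t
    using biv_domain_invariant[OF A(2) B(2) _ _ _ _ assms(11-13) that] assms(5-8) by simp
  have "(x \<longlongrightarrow> 0) at_top"
    by (rule biv_component_tendsto_0[OF A(1) A(2)[THEN conjunct1] assms(5,6,9) dom assms(12)])
  moreover have "(y \<longlongrightarrow> 0) at_top"
    by (rule biv_component_tendsto_0[OF B(1) B(2)[THEN conjunct1] assms(7,8,10)
          biv_domain_swap[OF dom] assms(13)])
  ultimately show ?thesis
    by (rule tendsto_Pair)
qed

end
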